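(* Let $F$ be a unit tree and let $L,M$ be opposite politeral units of $F$. Then for every $!$-unit $!E$ of $F$: $!E$ dominates $L$ in $F$ if and only if $!E$ dominates $M$ in $F$.
   Context: Formulas are built from atoms by $\neg$ (on atoms only), binary $\wedge,\vee$ and unary $!$ (branching recurrence) and $?$ (branching corecurrence). Fix a formula $\mathbb{F}_0$. Oformulas are occurrences of subformulas of $\mathbb{F}_0$. Politerals are occurrences of literals $P$ or $\neg P$ that are not in the scope of $\neg$. The modal depth of an oformula is the number of its proper superoccurrences of the form $!E$ or $?E$. A unit is $E[\vec x]$, with $E$ an oformula and $\vec x$ a tuple of infinite bitstrings whose length is the modal depth of $E$. Parenthood: - $G_0[\vec x]$ and $G_1[\vec x]$ are the children of $(G_0\wedge G_1)[\vec x]$ and of $(G_0\vee G_1)[\vec x]$; - the $G[\vec x,y]$, for all infinite bitstrings $y$, are the children of $!G[\vec x]$ and of $?G[\vec x]$. The root is $\mathbb{F}_0[\,]$. "Subunit" and "superunit" are the reflexive-transitive closures of the child relation and its converse, and "proper" means distinct. The $\mathbb{F}_0$-origin $\tilde E$ of $E[\vec x]$ is $E$. $!$-, $?$-, $\wedge$-, $\vee$- and politeral units are those whose origin is of the corresponding form. The smallest common superunit of two units is their common superunit that is a subunit of all their common superunits. $E$ drives $G$ through $H$ iff $H$ is the smallest common superunit of $E,G$ and no proper $?$-superunit of $E$ is a subunit of $H$. A unit tree is a nonempty set $S$ of units such that, for each $E\in S$: all superunits of $E$ are in $S$; if $E$ is a $\wedge$- or $\vee$-unit, both children of $E$ are in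 $S$; and if $E$ is a $!$- or $?$-unit, at least one child of $E$ is in $S$. Runs are sequences of labeled moves $\wp\beta$ with $\wp\in\{\top,\bot\}$. For a run $\Theta$ and a string $\alpha$, $\Theta^{\alpha}$ keeps only the labmoves whose move begins with $\alpha$ and deletes that prefix. For an infinite bitstring $y$, $\Theta^{\preceq y}$ keeps only the labmoves $\wp\,u.\beta$ with $u$ a finite prefix of $y$ and deletes "$u.$". Fix an arbitrary run $\Omega$. Its projection on $\mathbb{F}_0[\,]$ is $\Omega$. If $\Theta$ is the projection on $E[\vec x]$, then the projection on the child $G_i[\vec x]$ of a $\wedge$/$\vee$-unit is $\Theta^{i.}$, and on the child $G[\vec x,y]$ of a $!$/$?$-unit it is $\Theta^{\preceq y}$. Politeral units $L,M$ are opposite iff $\tilde L$ and $\tilde M$ are literals one of which is the negation of the other and, for each $\wp\in\{\top,\bot\}$, the set of $\wp$-labeled moves in the projection of $\Omega$ on $L$ equals the set of $\neg\wp$-labeled moves in the projection of $\Omega$ on $M$. For a unit tree $F$ and $!E,G\in F$, a $!E$-over-$G$ domination chain in $F$ is a sequence $L_1,M_1,X_1,\dots,L_n,M_n,X_n$ ($n\ge1$) of units such that, writing $L_{n+1}=G$, for each $i\le n$: 1. $L_i,M_i$ are opposite politeral units of $F$; 2. $M_i$ drives $L_{i+1}$ through $X_i$; 3. $M_i$ drives no $L_j$ with $i+2\le j\le n+1$; 4. $M_i$ is not a subunit of $!E$; 5. $L_1$ is a subunit of $!E$. $!E$ dominates $G$ in $F$ iff $!E,G\in F$ and either $G$ is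 a proper subunit of $!E$ or there exists a $!E$-over-$G$ domination chain in $F$. *)

theory Defs
  imports Main
begin

text \<open>Formulas over atoms of type 'a: negation is applied to atoms only, so literals are
  Atom P (i.e. P) and NegAtom P (i.e. the negation of P).\<close>
datatype 'a form =
    Atom 'a
  | NegAtom 'a
  | Conj "'a form" "'a form"
  | Disj "'a form" "'a form"
  | Bang "'a form"
  | Quest "'a form"

text \<open>Occurrences (oformulas) of subformulas of a fixed formula F0 are represented by
  positions (paths) in F0: 0/1 select the left/right argument of a binary connective,
  0 selects the argument of a unary one.\<close>
fun subf :: "'a form \<Rightarrow> nat list \<Rightarrow> 'a form option" where
  "subf F [] = Some F"
| "subf (Conj A B) (i # p) = (if i = 0 then subf A p else if i = 1 then subf B p else None)"
| "subf (Disj A B) (i # p) = (if i = 0 then subf A p else if i = 1 then subf B p else None)"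
| "subf (Bang A) (i # p) = (if i = 0 then subf A p else None)"
| "subf (Quest A) (i # p) = (if i = 0 then subf A p else None)"
| "subf (Atom a) (i # p) = None"
| "subf (NegAtom a) (i # p) = None"

definition is_modal :: "'a form \<Rightarrow> bool" where
  "is_modal G \<longleftrightarrow> (\<exists>A. G = Bang A) \<or> (\<exists>A. G = Quest A)"

definition is_binary :: "'a form \<Rightarrow> bool" where
  "is_binary G \<longleftrightarrow> (\<exists>A B. G = Conj A B) \<or> (\<exists>A B. G = Disj A B)"

definition is_literal :: "'a form \<Rightarrow> bool" where
  "is_literal G \<longleftrightarrow> (\<exists>a. G = Atom a) \<or> (\<exists>a. G = NegAtom a)"

definition mdepth :: "'a form \<Rightarrow> nat list \<Rightarrow> nat" where
  "mdepth F0 p = length (filter (\<lambda>k. case subf F0 (take k p) of Some G \<Rightarrow> is_modal G | None \<Rightarrow> False)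
                         [0..<length p])"

text \<open>Infinite bitstrings are functions nat \<Rightarrow> bool (True = 1). A unit is a pair of an
  oformula (position) and a tuple of infinite bitstrings, outermost modality first.\<close>
type_synonym unit = "nat list \<times> (nat \<Rightarrow> bool) list"

definition is_unit :: "'a form \<Rightarrow> unit \<Rightarrow> bool" where
  "is_unit F0 U \<longleftrightarrow> subf F0 (fst U) \<noteq> None \<and> length (snd U) = mdepth F0 (fst U)"

definition origin :: "'a form \<Rightarrow> unit \<Rightarrow> 'a form" where
  "origin F0 U = the (subf F0 (fst U))"

definition bang_unit :: "'a form \<Rightarrow> unit \<Rightarrow> bool" where
  "bang_unit F0 U \<longleftrightarrow> is_unit F0 U \<and> (\<exists>A. origin F0 U = Bang A)"

definition quest_unit :: "'a form \<Rightarrow> unit \<Rightarrow> bool" where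
  "quest_unit F0 U \<longleftrightarrow> is_unit F0 U \<and> (\<exists>A. origin F0 U = Quest A)"

definition binary_unit :: "'a form \<Rightarrow> unit \<Rightarrow> bool" where
  "binary_unit F0 U \<longleftrightarrow> is_unit F0 U \<and> is_binary (origin F0 U)"

definition modal_unit :: "'a form \<Rightarrow> unit \<Rightarrow> bool" where
  "modal_unit F0 U \<longleftrightarrow> is_unit F0 U \<and> is_modal (origin F0 U)"

definition politeral_unit :: "'a form \<Rightarrow> unit \<Rightarrow> bool" where
  "politeral_unit F0 U \<longleftrightarrow> is_unit F0 U \<and> is_literal (origin F0 U)"

definition child :: "'a form \<Rightarrow> unit \<Rightarrow> unit \<Rightarrow> bool" where
  "child F0 U V \<longleftrightarrow>
     (binary_unit F0 U \<and> (V = (fst U @ [0], snd U) \<or> V = (fst U @ [1], snd U))) \<or>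
     (modal_unit F0 U \<and> (\<exists>y. V = (fst U @ [0], snd U @ [y])))"

definition subunit :: "'a form \<Rightarrow> unit \<Rightarrow> unit \<Rightarrow> bool" where
  "subunit F0 V U \<longleftrightarrow> (child F0)\<^sup>*\<^sup>* U V"

definition common_superunit :: "'a form \<Rightarrow> unit \<Rightarrow> unit \<Rightarrow> unit \<Rightarrow> bool" where
  "common_superunit F0 E G H \<longleftrightarrow> subunit F0 E H \<and> subunit F0 G H"

definition smallest_common_superunit :: "'a form \<Rightarrow> unit \<Rightarrow> unit \<Rightarrow> unit \<Rightarrow> bool" where
  "smallest_common_superunit F0 E G H \<longleftrightarrow>
     common_superunit F0 E G H \<and> (\<forall>K. common_superunit F0 E G K \<longrightarrow> subunit F0 H K)"

definition drives :: "'a form \<Rightarrow> unit \<Rightarrow> unit \<Rightarrow> unit \<Rightarrow> bool" where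
  "drives F0 E G H \<longleftrightarrow>
     smallest_common_superunit F0 E G H \<and>
     \<not> (\<exists>K. subunit F0 E K \<and> K \<noteq> E \<and> quest_unit F0 K \<and> subunit F0 K H)"

definition unit_tree :: "'a form \<Rightarrow> unit set \<Rightarrow> bool" where
  "unit_tree F0 S \<longleftrightarrow> S \<noteq> {} \<and>
     (\<forall>E\<in>S. is_unit F0 E \<and>
        (\<forall>K. subunit F0 E K \<longrightarrow> K \<in> S) \<and>
        (binary_unit F0 E \<longrightarrow> (\<forall>K. child F0 E K \<longrightarrow> K \<in> S)) \<and>
        (modal_unit F0 E \<longrightarrow> (\<exists>K. child F0 E K \<and> K \<in> S)))"

datatype player = Top | Bot

fun opp :: "player \<Rightarrow> player" where
  "opp Top = Bot" | "opp Bot = Top"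

text \<open>A run (finite or infinite sequence of labeled moves, a move being a string) is
  represented as a sequence with gaps: index n carries either no labmove (None) or one
  labmove. The run is the sequence of the non-None entries in order.\<close>
type_synonym run = "nat \<Rightarrow> (player \<times> string) option"

definition run_prefix :: "string \<Rightarrow> run \<Rightarrow> run" where
  "run_prefix \<alpha> \<Theta> = (\<lambda>n. case \<Theta> n of
       None \<Rightarrow> None
     | Some (w, m) \<Rightarrow> (if take (length \<alpha>) m = \<alpha> then Some (w, drop (length \<alpha>) m) else None))"

definition bits :: "bool list \<Rightarrow> string" where
  "bits u = map (\<lambda>b. if b then CHR ''1'' else CHR ''0'') u"

definition is_prefix_of_inf :: "bool list \<Rightarrow> (nat \<Rightarrow> bool) \<Rightarrow> bool" where
  "is_prefix_of_inf u y \<longleftrightarrow> (\<forall>k<length u. u ! k = y k)"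

definition run_branch :: "(nat \<Rightarrow> bool) \<Rightarrow> run \<Rightarrow> run" where
  "run_branch y \<Theta> = (\<lambda>n. case \<Theta> n of
       None \<Rightarrow> None
     | Some (w, m) \<Rightarrow>
         (if \<exists>u \<beta>. m = bits u @ CHR ''.'' # \<beta> \<and> is_prefix_of_inf u y
          then Some (w, SOME \<beta>. \<exists>u. m = bits u @ CHR ''.'' # \<beta> \<and> is_prefix_of_inf u y)
          else None))"

fun proj :: "'a form \<Rightarrow> run \<Rightarrow> nat list \<Rightarrow> (nat \<Rightarrow> bool) list \<Rightarrow> run" where
  "proj F \<Theta> [] xs = \<Theta>"
| "proj (Conj A B) \<Theta> (i # p) xs =
     (if i = 0 then proj A (run_prefix ''0.'' \<Theta>) p xs else proj B (run_prefix ''1.'' \<Theta>) p xs)"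
| "proj (Disj A B) \<Theta> (i # p) xs =
     (if i = 0 then proj A (run_prefix ''0.'' \<Theta>) p xs else proj B (run_prefix ''1.'' \<Theta>) p xs)"
| "proj (Bang A) \<Theta> (i # p) xs = proj A (run_branch (hd xs) \<Theta>) p (tl xs)"
| "proj (Quest A) \<Theta> (i # p) xs = proj A (run_branch (hd xs) \<Theta>) p (tl xs)"
| "proj (Atom a) \<Theta> (i # p) xs = \<Theta>"
| "proj (NegAtom a) \<Theta> (i # p) xs = \<Theta>"

definition projection :: "'a form \<Rightarrow> run \<Rightarrow> unit \<Rightarrow> run" where
  "projection F0 \<Omega> U = proj F0 \<Omega> (fst U) (snd U)"

definition moves_of :: "player \<Rightarrow> run \<Rightarrow> string set" where
  "moves_of w \<Theta> = {\<beta>. \<exists>n. \<Theta> n = Some (w, \<beta>)}"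

definition opposite :: "'a form \<Rightarrow> run \<Rightarrow> unit \<Rightarrow> unit \<Rightarrow> bool" where
  "opposite F0 \<Omega> L M \<longleftrightarrow>
     politeral_unit F0 L \<and> politeral_unit F0 M \<and>
     (\<exists>a. (origin F0 L = Atom a \<and> origin F0 M = NegAtom a) \<or>
          (origin F0 L = NegAtom a \<and> origin F0 M = Atom a)) \<and>
     (\<forall>w. moves_of w (projection F0 \<Omega> L) = moves_of (opp w) (projection F0 \<Omega> M))"

text \<open>A !E-over-G domination chain L_1,M_1,X_1,...,L_n,M_n,X_n in F, given by functions
  Ls, Ms, Xs on indices 1..n, with L_{n+1} = G.\<close>
definition domination_chain ::
  "'a form \<Rightarrow> run \<Rightarrow> unit set \<Rightarrow> unit \<Rightarrow> unit \<Rightarrow> nat \<Rightarrow>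
   (nat \<Rightarrow> unit) \<Rightarrow> (nat \<Rightarrow> unit) \<Rightarrow> (nat \<Rightarrow> unit) \<Rightarrow> bool" where
  "domination_chain F0 \<Omega> F BE G n Ls Ms Xs \<longleftrightarrow>
     (let LL = (\<lambda>i. if i = Suc n then G else Ls i) in
       n \<ge> 1 \<and>
       (\<forall>i\<in>{1..n}.
          politeral_unit F0 (Ls i) \<and> politeral_unit F0 (Ms i) \<and>
          Ls i \<in> F \<and> Ms i \<in> F \<and> opposite F0 \<Omega> (Ls i) (Ms i) \<and>
          drives F0 (Ms i) (LL (Suc i)) (Xs i) \<and>
          (\<forall>j. i + 2 \<le> j \<and> j \<le> Suc n \<longrightarrow> \<not> (\<exists>H. drives F0 (Ms i) (LL j) H)) \<and>
          \<not> subunit F0 (Ms i) BE) \<and>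
       subunit F0 (Ls 1) BE)"

definition dominates :: "'a form \<Rightarrow> run \<Rightarrow> unit set \<Rightarrow> unit \<Rightarrow> unit \<Rightarrow> bool" where
  "dominates F0 \<Omega> F BE G \<longleftrightarrow>
     BE \<in> F \<and> G \<in> F \<and>
     ((subunit F0 G BE \<and> G \<noteq> BE) \<or> (\<exists>n Ls Ms Xs. domination_chain F0 \<Omega> F BE G n Ls Ms Xs))"

end

theory Submission
  imports Defs
begin

text \<open>
  Domination of a politeral unit is transferred to its opposite by rerouting
  domination chains.  If L is a subunit of !E, the one-link
  chain L, M, M is a !E-over-M chain (every unit drives itself through itself).  If instead
  there is a !E-over-L chain L_1, M_1, X_1, ..., L_n, M_n, X_n, let k be the least index such
  that M_k drives M.  If k exists, cutting the chain after the k-th link and aiming it at M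
  gives a !E-over-M chain; otherwise appending the link L, M, M does.  Finally, M being a
  subunit of !E makes it a proper one, since a literal unit is never a !-unit.
\<close>

text \<open>A child sits one level deeper in the formula, so the subunit relation is antisymmetric.\<close>
lemma child_depth: "child F0 U V \<Longrightarrow> length (fst V) = Suc (length (fst U))"
  unfolding child_def by auto

lemma descendant_depth:
  "(child F0)\<^sup>*\<^sup>* U V \<Longrightarrow> length (fst U) \<le> length (fst V) \<and> (length (fst U) = length (fst V) \<longrightarrow> U = V)"
proof (induction rule: rtranclp_induct)
  case base
  then show ?case by simp
next
  case (step V W)
  then show ?case using child_depth[of F0 V W] by auto
qed

lemma subunit_antisym: "subunit F0 U V \<Longrightarrow> subunit F0 V U \<Longrightarrow> U = V"
  unfolding subunit_def using descendant_depth by (metis le_antisym)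

text \<open>Every unit drives itself through itself: it is its own smallest common superunit, and
  no proper superunit of it is one of its subunits.\<close>
lemma drives_self: "drives F0 M M M"
  unfolding drives_def smallest_common_superunit_def common_superunit_def
  using subunit_antisym[of F0 M] by (auto simp: subunit_def)

text \<open>Opposition of politeral units is symmetric, since opp is an involution.\<close>
lemma opp_opp [simp]: "opp (opp w) = w"
  by (cases w) auto

lemma opposite_sym: "opposite F0 \<Omega> L M \<Longrightarrow> opposite F0 \<Omega> M L"
  unfolding opposite_def by (metis opp_opp)

definition chain_link :: "'a form \<Rightarrow> run \<Rightarrow> unit set \<Rightarrow> unit \<Rightarrow> unit \<Rightarrow> unit \<Rightarrow> bool" where
  "chain_link F0 \<Omega> F BE L M \<longleftrightarrow>
     politeral_unit F0 L \<and> politeral_unit F0 M \<and> L \<in> F \<and> M \<in> F \<and>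
     opposite F0 \<Omega> L M \<and> \<not> subunit F0 M BE"

lemma domination_chain_iff:
  "domination_chain F0 \<Omega> F BE G n Ls Ms Xs \<longleftrightarrow>
     n \<ge> 1 \<and> subunit F0 (Ls 1) BE \<and>
     (\<forall>i\<in>{1..n}. chain_link F0 \<Omega> F BE (Ls i) (Ms i) \<and>
        drives F0 (Ms i) ((Ls(Suc n := G)) (Suc i)) (Xs i) \<and>
        (\<forall>j. i + 2 \<le> j \<and> j \<le> Suc n \<longrightarrow> \<not> (\<exists>H. drives F0 (Ms i) ((Ls(Suc n := G)) j) H)))"
proof -
  have "(\<lambda>i. if i = Suc n then G else Ls i) = Ls(Suc n := G)"
    by (auto simp: fun_upd_def)
  then show ?thesis
    unfolding domination_chain_def chain_link_def Let_def by auto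
qed

lemma domination_chain_start:
  assumes "domination_chain F0 \<Omega> F BE G n Ls Ms Xs"
  shows "n \<ge> 1" and "subunit F0 (Ls 1) BE"
  using assms by (simp_all add: domination_chain_iff)

lemma domination_chain_linkD:
  assumes "domination_chain F0 \<Omega> F BE G n Ls Ms Xs" and "i \<in> {1..n}"
  shows "chain_link F0 \<Omega> F BE (Ls i) (Ms i)"
    and "drives F0 (Ms i) ((Ls(Suc n := G)) (Suc i)) (Xs i)"
    and "\<lbrakk>i + 2 \<le> j; j \<le> Suc n\<rbrakk> \<Longrightarrow> \<not> drives F0 (Ms i) ((Ls(Suc n := G)) j) H"
  using assms unfolding domination_chain_iff by blast+

lemma domination_chain_truncate:
  assumes chain: "domination_chain F0 \<Omega> F BE G n Ls Ms Xs"
    and k: "k \<in> {1..n}" and drive: "drives F0 (Ms k) G' H"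
    and earlier: "\<And>i. i \<in> {1..<k} \<Longrightarrow> \<not> (\<exists>H. drives F0 (Ms i) G' H)"
  shows "domination_chain F0 \<Omega> F BE G' k Ls Ms (Xs(k := H))"
  unfolding domination_chain_iff
proof (intro conjI ballI allI impI)
  show "1 \<le> k" using k by simp
  show "subunit F0 (Ls 1) BE" using domination_chain_start[OF chain] by simp
next
  fix i assume i: "i \<in> {1..k}"
  then have i_n: "i \<in> {1..n}" using k by auto
  show "chain_link F0 \<Omega> F BE (Ls i) (Ms i)"
    using domination_chain_linkD(1)[OF chain i_n] .
  show "drives F0 (Ms i) ((Ls(Suc k := G')) (Suc i)) ((Xs(k := H)) i)"
  proof (cases "i = k")
    case True
    then show ?thesis using drive by simp
  next
    case False
    then show ?thesis using domination_chain_linkD(2)[OF chain i_n] i k by simp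
  qed
  fix j assume j: "i + 2 \<le> j \<and> j \<le> Suc k"
  show "\<not> (\<exists>H. drives F0 (Ms i) ((Ls(Suc k := G')) j) H)"
  proof (cases "j = Suc k")
    case True
    then show ?thesis using earlier[of i] i j by auto
  next
    case False
    then show ?thesis using domination_chain_linkD(3)[OF chain i_n, of j] j k by auto
  qed
qed

lemma domination_chain_extend:
  assumes chain: "domination_chain F0 \<Omega> F BE G n Ls Ms Xs"
    and link: "chain_link F0 \<Omega> F BE G M"
    and no_drive: "\<And>i. i \<in> {1..n} \<Longrightarrow> \<not> (\<exists>H. drives F0 (Ms i) M H)"
  shows "domination_chain F0 \<Omega> F BE M (Suc n) (Ls(Suc n := G)) (Ms(Suc n := M)) (Xs(Suc n := M))"
  unfolding domination_chain_iff
proof (intro conjI ballI allI impI)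
  show "1 \<le> Suc n" by simp
  show "subunit F0 ((Ls(Suc n := G)) 1) BE"
    using domination_chain_start[OF chain] by simp
next
  fix i assume i: "i \<in> {1..Suc n}"
  show "chain_link F0 \<Omega> F BE ((Ls(Suc n := G)) i) ((Ms(Suc n := M)) i)"
  proof (cases "i = Suc n")
    case True
    then show ?thesis using link by simp
  next
    case False
    then show ?thesis using domination_chain_linkD(1)[OF chain, of i] i by simp
  qed
  show "drives F0 ((Ms(Suc n := M)) i) ((Ls(Suc n := G, Suc (Suc n) := M)) (Suc i))
          ((Xs(Suc n := M)) i)"
  proof (cases "i = Suc n")
    case True
    then show ?thesis using drives_self[of F0 M] by simp
  next
    case False
    then show ?thesis using domination_chain_linkD(2)[OF chain, of i] i by simp
  qed
  fix j assume j: "i + 2 \<le> j \<and> j \<le> Suc (Suc n)"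
  then have i_n: "i \<in> {1..n}" using i by auto
  show "\<not> (\<exists>H. drives F0 ((Ms(Suc n := M)) i) ((Ls(Suc n := G, Suc (Suc n) := M)) j) H)"
  proof (cases "j = Suc (Suc n)")
    case True
    then show ?thesis using no_drive[OF i_n] i_n by auto
  next
    case False
    then show ?thesis using domination_chain_linkD(3)[OF chain i_n, of j] i_n j by auto
  qed
qed

lemma domination_chain_single:
  assumes "subunit F0 L BE" and "chain_link F0 \<Omega> F BE L M"
  shows "domination_chain F0 \<Omega> F BE M 1 (\<lambda>_. L) (\<lambda>_. M) (\<lambda>_. M)"
  unfolding domination_chain_iff using assms drives_self[of F0 M] by (simp; presburger)

text \<open>Rerouting: a chain aimed at G yields a chain aimed at any M forming a link with G.
  Cut at the first M_k that drives M if there is one, otherwise extend.\<close>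
lemma domination_chain_reroute:
  assumes chain: "domination_chain F0 \<Omega> F BE G n Ls Ms Xs"
    and link: "chain_link F0 \<Omega> F BE G M"
  shows "\<exists>n' Ls' Ms' Xs'. domination_chain F0 \<Omega> F BE M n' Ls' Ms' Xs'"
proof (cases "\<exists>i. i \<in> {1..n} \<and> (\<exists>H. drives F0 (Ms i) M H)")
  case True
  then obtain k where k_drives: "k \<in> {1..n} \<and> (\<exists>H. drives F0 (Ms k) M H)"
    and k_least: "\<And>i. i < k \<Longrightarrow> \<not> (i \<in> {1..n} \<and> (\<exists>H. drives F0 (Ms i) M H))"
    unfolding exists_least_iff[of "\<lambda>i. i \<in> {1..n} \<and> (\<exists>H. drives F0 (Ms i) M H)"] by blast
  then obtain H where k: "k \<in> {1..n}" and drive: "drives F0 (Ms k) M H" by blast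
  have "\<not> (\<exists>H. drives F0 (Ms i) M H)" if "i \<in> {1..<k}" for i
    using that k k_least[of i] by auto
  then show ?thesis
    using domination_chain_truncate[OF chain k drive] by blast
next
  case False
  then show ?thesis
    using domination_chain_extend[OF chain link] by blast
qed

text \<open>One direction of the theorem; the other follows by symmetry of opposition.\<close>
lemma dominates_opposite:
  assumes dom: "dominates F0 \<Omega> F BE L"
    and opposite: "opposite F0 \<Omega> L M" and M_in: "M \<in> F" and bang: "bang_unit F0 BE"
  shows "dominates F0 \<Omega> F BE M"
proof (cases "subunit F0 M BE")
  case True
  text \<open>A politeral unit differs from the !-unit !E, so M is a proper subunit of it.\<close>
  have "M \<noteq> BE"
    using opposite bang unfolding opposite_def politeral_unit_def bang_unit_def is_literal_def
    by auto
  then show ?thesis using True dom M_in unfolding dominates_def by auto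
next
  case M_outside: False
  have link: "chain_link F0 \<Omega> F BE L M"
    using dom opposite M_in M_outside unfolding dominates_def opposite_def chain_link_def by auto
  have "\<exists>n Ls Ms Xs. domination_chain F0 \<Omega> F BE M n Ls Ms Xs"
  proof (cases "subunit F0 L BE")
    case True
    then show ?thesis using domination_chain_single link by blast
  next
    case False
    then obtain n Ls Ms Xs where "domination_chain F0 \<Omega> F BE L n Ls Ms Xs"
      using dom unfolding dominates_def by blast
    then show ?thesis using domination_chain_reroute link by blast
  qed
  then show ?thesis using dom M_in unfolding dominates_def by auto
qed

theorem lemma8p4:
  fixes F0 :: "'a form" and \<Omega> :: run and F :: "unit set" and L M BE :: unit
  assumes "unit_tree F0 F"
    and "L \<in> F" and "M \<in> F"
    and "politeral_unit F0 L" and "politeral_unit F0 M"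
    and "opposite F0 \<Omega> L M"
    and "BE \<in> F" and "bang_unit F0 BE"
  shows "dominates F0 \<Omega> F BE L \<longleftrightarrow> dominates F0 \<Omega> F BE M"
  using dominates_opposite[OF _ assms(6) assms(3) assms(8)]
    dominates_opposite[OF _ opposite_sym[OF assms(6)] assms(2) assms(8)]
  by blast

end
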